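(* Let $k>l\ge0$ be integers with $k+l\ge3$, let $\theta\in\mathbb{R}$, $\xi=e^{i\theta}$, $f:\mathbb{N}\to[0,\infty)$, and $A=\xi(a^\dagger)^ka^l+\xi^*(a^\dagger)^la^k+f(a^\dagger a)$ with domain $\mathcal{D}_0$. Assume $f(n)/\beta^{kl}_n$ admits an asymptotic expansion in powers of $n^{-1/2}$, $$\frac{f(n)}{\beta^{kl}_n}\sim\kappa+\frac{L_1}{n^{1/2}}+\frac{L_2}{n}+\cdots$$ with $\kappa<2$. Then $A$ is unbounded from below, and so is every self-adjoint extension of $A$.
   Context: $\mathbb{N}=\{0,1,2,\dots\}$. $\mathcal{H}$ is a separable complex Hilbert space with orthonormal basis $(\phi_n)_{n\in\mathbb{N}}$; $\mathcal{D}_0$ is the set of finite linear combinations of the $\phi_n$. The operators $a,a^\dagger$ have domain $\mathcal{D}_0$ and act by $a\phi_n=\sqrt{n}\,\phi_{n-1}$ ($a\phi_0=0$), $a^\dagger\phi_n=\sqrt{n+1}\,\phi_{n+1}$, extended linearly. $f(a^\dagger a)$ has domain $\mathcal{D}_0$ and $f(a^\dagger a)\phi_n=f(n)\phi_n$. For integers $x$ and $s\ge0$, $(x,s)=x(x+1)\cdots(x+s-1)$ ($=1$ if $s=0$), with $(x,s)=0$ whenever $x$ is a negative integer; $\beta^{kl}_n=\sqrt{(n-l+1,l)(n-l+1,k)}$. A function $g:\mathbb{N}\to\mathbb{C}$ admits the asymptotic expansion $g(n)\sim\sum_{s\ge0}\lambda_sn^{-s/2}$ if for every $S$ there are $C,N$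 with $|g(n)-\sum_{s=0}^S\lambda_sn^{-s/2}|\le Cn^{-(S+1)/2}$ for $n\ge N$. *)

theory Defs
  imports Complex_Main
begin

text \<open>The Hilbert space H is realised as l^2(N): coordinates w.r.t. the orthonormal
basis phi_n, i.e. phi_n is the indicator sequence of n.\<close>

definition l2 :: "(nat \<Rightarrow> complex) set" where
  "l2 = {x. summable (\<lambda>n. (cmod (x n))\<^sup>2)}"

definition ip :: "(nat \<Rightarrow> complex) \<Rightarrow> (nat \<Rightarrow> complex) \<Rightarrow> complex" where
  "ip x y = (\<Sum>n. cnj (x n) * y n)"

definition nrm2 :: "(nat \<Rightarrow> complex) \<Rightarrow> real" where
  "nrm2 x = (\<Sum>n. (cmod (x n))\<^sup>2)"

definition D0 :: "(nat \<Rightarrow> complex) set" where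
  "D0 = {x. finite {n. x n \<noteq> 0}}"

text \<open>Annihilation a phi_n = sqrt n phi_(n-1), creation a^dagger phi_n = sqrt(n+1) phi_(n+1),
 written in coordinates.\<close>
definition ann :: "(nat \<Rightarrow> complex) \<Rightarrow> (nat \<Rightarrow> complex)" where
  "ann x = (\<lambda>m. complex_of_real (sqrt (real (m + 1))) * x (m + 1))"

definition cre :: "(nat \<Rightarrow> complex) \<Rightarrow> (nat \<Rightarrow> complex)" where
  "cre x = (\<lambda>m. if m = 0 then 0 else complex_of_real (sqrt (real m)) * x (m - 1))"

definition opA :: "nat \<Rightarrow> nat \<Rightarrow> complex \<Rightarrow> (nat \<Rightarrow> real) \<Rightarrow>
    (nat \<Rightarrow> complex) \<Rightarrow> (nat \<Rightarrow> complex)" where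
  "opA k l \<xi> f x = (\<lambda>m. \<xi> * (cre ^^ k) ((ann ^^ l) x) m
                      + cnj \<xi> * (cre ^^ l) ((ann ^^ k) x) m
                      + complex_of_real (f m) * x m)"

definition rfac :: "int \<Rightarrow> nat \<Rightarrow> real" where
  "rfac x s = (if x < 0 then 0 else pochhammer (real_of_int x) s)"

definition beta :: "nat \<Rightarrow> nat \<Rightarrow> nat \<Rightarrow> real" where
  "beta k l n = sqrt (rfac (int n - int l + 1) l * rfac (int n - int l + 1) k)"

definition asymp_expansion :: "(nat \<Rightarrow> real) \<Rightarrow> (nat \<Rightarrow> real) \<Rightarrow> bool" where
  "asymp_expansion g lam \<longleftrightarrow>
     (\<forall>S::nat. \<exists>(C::real) (N::nat). \<forall>n\<ge>N.
        \<bar>g n - (\<Sum>s\<le>S. lam s * real n powr (- real s / 2))\<bar>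
          \<le> C * real n powr (- (real S + 1) / 2))"

text \<open>An operator (D,T) is unbounded from below: no M with <x,Tx> >= M ||x||^2 on D.
 (For the symmetric operators considered, <x,Tx> is real; we use its real part.)\<close>
definition unbounded_below :: "(nat \<Rightarrow> complex) set \<Rightarrow>
    ((nat \<Rightarrow> complex) \<Rightarrow> (nat \<Rightarrow> complex)) \<Rightarrow> bool" where
  "unbounded_below D T \<longleftrightarrow> (\<forall>M::real. \<exists>x\<in>D. Re (ip x (T x)) < M * nrm2 x)"

text \<open>(D,B) is a self-adjoint operator in l2 extending (D0,A):
 B maps D into l2, D contains D0, B agrees with A on D0, and the adjoint of (D,B)
 has domain exactly D and acts as B there.\<close>
definition self_adjoint_extension ::
  "(nat \<Rightarrow> complex) set \<Rightarrow> ((nat \<Rightarrow> complex) \<Rightarrow> (nat \<Rightarrow> complex)) \<Rightarrow>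
   (nat \<Rightarrow> complex) set \<Rightarrow> ((nat \<Rightarrow> complex) \<Rightarrow> (nat \<Rightarrow> complex)) \<Rightarrow> bool" where
  "self_adjoint_extension D B D' A \<longleftrightarrow>
     D \<subseteq> l2 \<and> B ` D \<subseteq> l2 \<and> D' \<subseteq> D \<and> (\<forall>x\<in>D'. B x = A x) \<and>
     {y\<in>l2. \<exists>z\<in>l2. \<forall>x\<in>D. ip (B x) y = ip x z} = D \<and>
     (\<forall>x\<in>D. \<forall>y\<in>D. ip (B x) y = ip x (B y))"

end

theory Submission
  imports Defs "HOL-Real_Asymp.Real_Asymp"
begin

text \<open>
  Put \<open>d = k - l\<close> and test \<open>A\<close> on \<open>x = \<Sum>j\<le>V. (-\<xi>)^j \<phi>\<^sub>n\<^sub>+\<^sub>j\<^sub>d\<close>. The two off-diagonal terms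
  of \<open>A\<close> shift by \<open>\<plusminus>d\<close> and couple neighbouring components with weight \<open>\<beta>\<close>; the phases
  are chosen so that both couplings contribute \<open>-\<beta>\<close>, whence
  \<open>\<langle>x, A x\<rangle> = \<Sum>j\<le>V. f(n+jd) - 2 \<Sum>j<V. \<beta>(n+jd)\<close> while \<open>\<parallel>x\<parallel>\<^sup>2 = V + 1\<close>.
  Only the leading coefficient of the expansion matters: \<open>f \<le> a \<beta>\<close> eventually for some
  \<open>a < 2\<close>. Since \<open>\<beta>\<close> is increasing, unbounded and slowly varying
  (\<open>\<beta>(n+Vd) \<le> 2 \<beta>(n)\<close> for large \<open>n\<close>), a long enough block \<open>V\<close> gives
  \<open>\<langle>x, A x\<rangle> \<le> -\<beta>(n) \<rightarrow> -\<infinity>\<close> at fixed norm. Extensions contain \<open>D\<^sub>0\<close>, so they inherit this.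
\<close>

lemma ann_funpow_apply:
  "(ann ^^ l) x m = complex_of_real (sqrt (pochhammer (real m + 1) l)) * x (m + l)"
proof (induction l arbitrary: m)
  case (Suc l)
  have "(ann ^^ Suc l) x m = complex_of_real (sqrt (real m + 1)) * (ann ^^ l) x (m + 1)"
    by (simp add: ann_def)
  also have "\<dots> = complex_of_real (sqrt (real m + 1) * sqrt (pochhammer (real m + 1 + 1) l))
      * x (m + Suc l)"
    using Suc by (simp add: add_ac)
  finally show ?case
    by (simp add: pochhammer_rec real_sqrt_mult)
qed simp

lemma cre_funpow_apply:
  "(cre ^^ k) y m = (if m < k then 0
     else complex_of_real (sqrt (pochhammer (real (m - k) + 1) k)) * y (m - k))"
proof (induction k arbitrary: m)
  case (Suc k)
  have step: "(cre ^^ Suc k) y m = (if m = 0 then 0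
      else complex_of_real (sqrt (real m)) * (cre ^^ k) y (m - 1))"
    by (simp add: cre_def)
  show ?case
  proof (cases "m < Suc k")
    case False
    then have "m - 1 - k = m - Suc k" "\<not> m - 1 < k" "m \<noteq> 0"
      "pochhammer (real (m - Suc k) + 1) (Suc k) = real m * pochhammer (real (m - Suc k) + 1) k"
      by (auto simp: pochhammer_rec')
    with False step Suc show ?thesis
      by (simp add: real_sqrt_mult)
  qed (use step Suc in auto)
qed simp

lemma beta_eq_pochhammer:
  "l \<le> n \<Longrightarrow>
    beta k l n = sqrt (pochhammer (real n - real l + 1) l * pochhammer (real n - real l + 1) k)"
  by (simp add: beta_def rfac_def)

lemma beta_eq_0: "n < l \<Longrightarrow> beta k l n = 0"
proof (cases "l = Suc n")
  case True
  then show ?thesis by (simp add: beta_def rfac_def pochhammer_0_left)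
qed (simp add: beta_def rfac_def)

lemma opA_apply:
  fixes \<xi> :: complex and x :: "nat \<Rightarrow> complex"
  assumes "k = l + d"
  shows "opA k l \<xi> f x m =
    (if k \<le> m then \<xi> * beta k l (m - d) * x (m - d) else 0)
    + cnj \<xi> * beta k l m * x (m + d) + f m * x m"
proof -
  have "(cre ^^ k) ((ann ^^ l) x) m = (if k \<le> m then beta k l (m - d) * x (m - d) else 0)"
  proof (cases "k \<le> m")
    case True
    then have "m - k + l = m - d" "real (m - d) - real l + 1 = real m - real k + 1"
      using assms by auto
    with True show ?thesis
      by (simp add: cre_funpow_apply ann_funpow_apply beta_eq_pochhammer real_sqrt_mult mult_ac)
  qed (simp add: cre_funpow_apply)
  moreover have "(cre ^^ l) ((ann ^^ k) x) m = beta k l m * x (m + d)"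
  proof (cases "l \<le> m")
    case True
    then have "m - l + k = m + d" using assms by auto
    with True show ?thesis
      by (simp add: cre_funpow_apply ann_funpow_apply beta_eq_pochhammer real_sqrt_mult mult_ac)
  qed (simp add: cre_funpow_apply beta_eq_0)
  ultimately show ?thesis
    by (simp add: opA_def mult_ac)
qed

lemma power_le_pochhammer: "0 \<le> x \<Longrightarrow> x ^ s \<le> pochhammer (x::real) s"
  unfolding pochhammer_prod by (rule order.trans[OF _ prod_mono[of _ "\<lambda>_. x"]]) auto

lemma pochhammer_nonneg_real: "0 \<le> x \<Longrightarrow> 0 \<le> pochhammer (x::real) s"
  using power_le_pochhammer zero_le_power order.trans by blast

lemma pochhammer_mono: "0 \<le> x \<Longrightarrow> x \<le> y \<Longrightarrow> pochhammer (x::real) s \<le> pochhammer y s"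
  unfolding pochhammer_prod by (intro prod_mono) auto

lemma pochhammer_shift_le:
  assumes "0 < x" "0 \<le> m"
  shows "pochhammer (x + m) s \<le> (1 + m / x) ^ s * pochhammer (x::real) s"
proof -
  have "pochhammer (x + m) s \<le> (\<Prod>i<s. (1 + m / x) * (x + real i))"
    unfolding pochhammer_prod atLeast0LessThan
    using assms by (intro prod_mono) (auto simp: field_simps)
  then show ?thesis
    by (simp add: prod.distrib pochhammer_prod atLeast0LessThan)
qed

lemma beta_nonneg: "0 \<le> beta k l n"
  by (simp add: beta_def rfac_def pochhammer_nonneg_real)

lemma mono_beta: "mono (beta k l)"
proof
  fix n n' :: nat assume "n \<le> n'"
  show "beta k l n \<le> beta k l n'"
  proof (cases "l \<le> n")
    case True
    with \<open>n \<le> n'\<close> show ?thesis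
      by (simp add: beta_eq_pochhammer pochhammer_mono pochhammer_nonneg mult_mono)
  qed (simp add: beta_eq_0 beta_nonneg)
qed

lemma sqrt_le_beta:
  assumes "l \<le> n" "0 < k"
  shows "sqrt (real n - real l + 1) \<le> beta k l n"
proof -
  define x where "x = real n - real l + 1"
  have "1 \<le> x" using assms by (simp add: x_def)
  then have "x \<le> x ^ (l + k)"
    using power_increasing[of 1 "l + k" x] assms by simp
  also have "\<dots> \<le> pochhammer x l * pochhammer x k"
    unfolding power_add using \<open>1 \<le> x\<close>
    by (intro mult_mono power_le_pochhammer) (auto simp: pochhammer_nonneg)
  finally show ?thesis
    using assms by (simp add: beta_eq_pochhammer x_def)
qed

lemma filterlim_beta_at_top:
  assumes "0 < k"
  shows "filterlim (beta k l) at_top sequentially"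
proof (rule filterlim_at_top_mono)
  show "filterlim (\<lambda>n. sqrt (real n - real l + 1)) at_top sequentially"
    by real_asymp
  show "\<forall>\<^sub>F n in sequentially. sqrt (real n - real l + 1) \<le> beta k l n"
    using eventually_ge_at_top[of l] by eventually_elim (use assms sqrt_le_beta in auto)
qed

lemma eventually_beta_shift_le:
  assumes "1 < c"
  shows "\<forall>\<^sub>F n in sequentially. beta k l (n + m) \<le> c * beta k l n"
proof -
  have "((\<lambda>n. (1 + real m / (real n - real l + 1)) ^ (k + l)) \<longlongrightarrow> (1 + 0) ^ (k + l))
      sequentially"
    by (intro tendsto_intros) real_asymp
  then have "\<forall>\<^sub>F n in sequentially. (1 + real m / (real n - real l + 1)) ^ (k + l) < c\<^sup>2"
    using assms by (intro order_tendstoD(2)) auto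
  with eventually_ge_at_top[of l] show ?thesis
  proof eventually_elim
    case (elim n)
    define x where "x = real n - real l + 1"
    have "0 < x" using elim by (simp add: x_def)
    have "l \<le> n + m" "real (n + m) - real l + 1 = x + real m"
      using elim by (auto simp: x_def)
    then have "(beta k l (n + m))\<^sup>2 = pochhammer (x + real m) l * pochhammer (x + real m) k"
      using \<open>0 < x\<close> by (simp only: beta_eq_pochhammer) (simp add: pochhammer_nonneg)
    also have "\<dots> \<le> ((1 + m / x) ^ l * pochhammer x l) * ((1 + m / x) ^ k * pochhammer x k)"
      using \<open>0 < x\<close>
      by (intro mult_mono pochhammer_shift_le) (auto simp: pochhammer_nonneg)
    also have "\<dots> = (1 + m / x) ^ (k + l) * (beta k l n)\<^sup>2"
      using elim \<open>0 < x\<close>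
      by (simp add: beta_eq_pochhammer x_def pochhammer_nonneg power_add)
    also have "\<dots> \<le> (c * beta k l n)\<^sup>2"
      using elim by (auto simp: x_def power_mult_distrib intro!: mult_right_mono)
    finally show ?case
      using assms beta_nonneg by (auto intro: power2_le_imp_le)
  qed
qed

lemma ip_eq_sum_support:
  "finite N \<Longrightarrow> (\<And>m. m \<notin> N \<Longrightarrow> x m = 0) \<Longrightarrow> ip x y = (\<Sum>m\<in>N. cnj (x m) * y m)"
  unfolding ip_def by (rule suminf_finite) auto

lemma nrm2_eq_sum_support:
  "finite N \<Longrightarrow> (\<And>m. m \<notin> N \<Longrightarrow> x m = 0) \<Longrightarrow> nrm2 x = (\<Sum>m\<in>N. (cmod (x m))\<^sup>2)"
  unfolding nrm2_def by (rule suminf_finite) auto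

lemma cnj_power_mult_self: "cmod w = 1 \<Longrightarrow> cnj (w ^ j) * w ^ j = 1"
  using complex_norm_square[of "w ^ j"] by (simp add: norm_power mult.commute)

text \<open>The vector \<open>\<Sum>j<W. w^j \<phi>\<^sub>n\<^sub>+\<^sub>j\<^sub>d\<close>.\<close>
definition progression_vector :: "complex \<Rightarrow> nat \<Rightarrow> nat \<Rightarrow> nat \<Rightarrow> nat \<Rightarrow> complex" where
  "progression_vector w d n W m =
    (if n \<le> m \<and> m < n + W * d \<and> d dvd (m - n) then w ^ ((m - n) div d) else 0)"

lemma progression_vector_at:
  "0 < d \<Longrightarrow> progression_vector w d n W (n + j * d) = (if j < W then w ^ j else 0)"
  by (auto simp: progression_vector_def)

lemma progression_vector_below: "m < n \<Longrightarrow> progression_vector w d n W m = 0"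
  by (simp add: progression_vector_def)

lemma progression_vector_eq_0:
  assumes "0 < d" "m \<notin> (\<lambda>j. n + j * d) ` {..<W}"
  shows "progression_vector w d n W m = 0"
proof (rule ccontr)
  assume "progression_vector w d n W m \<noteq> 0"
  then have "n \<le> m" "m < n + W * d" "d dvd (m - n)"
    by (auto simp: progression_vector_def split: if_splits)
  then obtain j where "m = n + j * d"
    by (metis dvd_def mult.commute le_add_diff_inverse)
  moreover from this \<open>m < n + W * d\<close> have "j < W"
    by simp
  ultimately show False
    using assms(2) by blast
qed

lemma progression_vector_in_D0:
  assumes "0 < d"
  shows "progression_vector w d n W \<in> D0"
proof -
  have "{m. progression_vector w d n W m \<noteq> 0} \<subseteq> (\<lambda>j. n + j * d) ` {..<W}"
    using progression_vector_eq_0[OF assms] by blast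
  then show ?thesis
    by (simp add: D0_def finite_subset)
qed

lemma inj_on_progression: "0 < d \<Longrightarrow> inj_on (\<lambda>j. n + j * d) (A :: nat set)"
  by (simp add: inj_on_def)

lemma nrm2_progression_vector:
  assumes "0 < d" "cmod w = 1"
  shows "nrm2 (progression_vector w d n W) = W"
proof -
  have "nrm2 (progression_vector w d n W)
      = (\<Sum>m\<in>(\<lambda>j. n + j * d) ` {..<W}. (cmod (progression_vector w d n W m))\<^sup>2)"
    using assms by (intro nrm2_eq_sum_support) (auto simp: progression_vector_eq_0)
  also have "\<dots> = (\<Sum>j<W. (cmod (progression_vector w d n W (n + j * d)))\<^sup>2)"
    using assms by (simp add: sum.reindex inj_on_progression)
  also have "\<dots> = W"
    using assms by (simp add: progression_vector_at norm_power)
  finally show ?thesis .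
qed

lemma ip_progression_vector_opA:
  fixes \<xi> w :: complex and V :: nat
  assumes kd: "k = l + d" and "0 < d" "l \<le> n" and w: "cmod w = 1"
  defines "x \<equiv> progression_vector w d n (Suc V)"
  shows "ip x (opA k l \<xi> f x) = of_real
    ((\<Sum>j<Suc V. f (n + j * d)) + 2 * Re (\<xi> * cnj w) * (\<Sum>j<V. beta k l (n + j * d)))"
proof -
  define c where "c = \<xi> * cnj w"
  define b where "b j = beta k l (n + j * d)" for j
  have x_at: "x (n + j * d) = (if j < Suc V then w ^ j else 0)" for j
    using \<open>0 < d\<close> by (simp add: x_def progression_vector_at)
  have summand: "cnj (x (n + j * d)) * opA k l \<xi> f x (n + j * d)
      = (if j = 0 then 0 else c * b (j - 1)) + (if j < V then cnj c * b j else 0) + f (n + j * d)"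
    if "j < Suc V" for j
  proof -
    have "cnj (w ^ j) * (if k \<le> n + j * d then \<xi> * beta k l (n + j * d - d) * x (n + j * d - d)
        else 0) = (if j = 0 then 0 else c * b (j - 1))"
    proof (cases j)
      case 0
      have "x (n - d) = 0" if "k \<le> n"
        using that kd \<open>0 < d\<close> by (simp add: x_def progression_vector_below)
      with 0 show ?thesis by simp
    next
      case (Suc i)
      then have "k \<le> n + j * d" "n + j * d - d = n + i * d"
        using kd \<open>l \<le> n\<close> by auto
      with Suc that show ?thesis
        using x_at[of i] cnj_power_mult_self[OF w, of i]
        by (simp add: x_at b_def c_def mult_ac)
    qed
    moreover have "cnj (w ^ j) * (cnj \<xi> * beta k l (n + j * d) * x (n + j * d + d))
        = (if j < V then cnj c * b j else 0)"
      using x_at[of "Suc j"] cnj_power_mult_self[OF w, of j]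
      by (simp add: add_ac b_def c_def mult_ac)
    moreover have "cnj (w ^ j) * (f (n + j * d) * x (n + j * d)) = f (n + j * d)"
      using that x_at[of j] cnj_power_mult_self[OF w, of j] by (simp add: mult_ac)
    ultimately show ?thesis
      using that by (simp add: opA_apply[OF kd] x_at distrib_left)
  qed
  have "ip x (opA k l \<xi> f x)
      = (\<Sum>m\<in>(\<lambda>j. n + j * d) ` {..<Suc V}. cnj (x m) * opA k l \<xi> f x m)"
    using \<open>0 < d\<close> by (intro ip_eq_sum_support) (auto simp: x_def progression_vector_eq_0)
  also have "\<dots> = (\<Sum>j<Suc V. cnj (x (n + j * d)) * opA k l \<xi> f x (n + j * d))"
    using \<open>0 < d\<close> by (simp add: sum.reindex inj_on_progression)
  also have "\<dots> = (\<Sum>j<Suc V. (if j = 0 then 0 else c * b (j - 1)))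
      + (\<Sum>j<Suc V. (if j < V then cnj c * b j else 0)) + (\<Sum>j<Suc V. f (n + j * d))"
    by (simp add: summand sum.distrib)
  also have "(\<Sum>j<Suc V. (if j = 0 then 0 else c * b (j - 1))) = c * (\<Sum>j<V. b j)"
    by (simp only: sum.lessThan_Suc_shift) (simp add: sum_distrib_left)
  also have "(\<Sum>j<Suc V. (if j < V then cnj c * b j else 0)) = cnj c * (\<Sum>j<V. b j)"
    by (simp add: sum_distrib_left)
  also have "c * (\<Sum>j<V. b j) + cnj c * (\<Sum>j<V. b j) + (\<Sum>j<Suc V. f (n + j * d))
      = of_real ((\<Sum>j<Suc V. f (n + j * d)) + 2 * Re c * (\<Sum>j<V. b j))"
    by (simp add: complex_add_cnj flip: distrib_right)
  finally show ?thesis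
    by (simp add: b_def c_def)
qed

lemma asymp_expansion_tendsto:
  assumes "asymp_expansion g L"
  shows "g \<longlonglongrightarrow> L 0"
proof -
  obtain C N where CN: "\<And>n. N \<le> n \<Longrightarrow>
      \<bar>g n - (\<Sum>s\<le>0. L s * real n powr (- real s / 2))\<bar> \<le> C * real n powr (- (real 0 + 1) / 2)"
    using assms unfolding asymp_expansion_def by blast
  have "(\<lambda>n. g n - L 0) \<longlonglongrightarrow> 0"
  proof (rule tendsto_0_le)
    show "(\<lambda>n. C * real n powr (- 1 / 2)) \<longlonglongrightarrow> 0"
      by real_asymp
    show "\<forall>\<^sub>F n in sequentially. norm (g n - L 0) \<le> norm (C * real n powr (- 1 / 2)) * 1"
      using eventually_ge_at_top[of "max N 1"] by eventually_elim (use CN in force)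
  qed
  then show ?thesis
    by (rule LIM_zero_cancel)
qed

lemma sum_sub_double_sum_le:
  fixes f b :: "nat \<Rightarrow> real"
  assumes "mono b" "0 \<le> b 0" "0 \<le> a" "2 * a + 1 \<le> (2 - a) * V"
    and "\<And>j. j \<le> V \<Longrightarrow> f j \<le> a * b j" and "b V \<le> 2 * b 0"
  shows "(\<Sum>j<Suc V. f j) - 2 * (\<Sum>j<V. b j) \<le> - b 0"
proof -
  have "2 - a \<ge> 0"
  proof (rule ccontr)
    assume "\<not> 2 - a \<ge> 0"
    then have "(2 - a) * V \<le> 0"
      by (simp add: mult_nonpos_nonneg)
    with assms(3,4) show False
      by linarith
  qed
  have "real V * b 0 \<le> (\<Sum>j<V. b j)"
    using sum_mono[of "{..<V}" "\<lambda>_. b 0" b] \<open>mono b\<close> by (simp add: monoD)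
  have "(\<Sum>j<Suc V. f j) \<le> (\<Sum>j<Suc V. a * b j)"
    using assms(5) by (intro sum_mono) auto
  then have "(\<Sum>j<Suc V. f j) - 2 * (\<Sum>j<V. b j) \<le> a * b V - (2 - a) * (\<Sum>j<V. b j)"
    by (simp add: sum_distrib_left[symmetric] algebra_simps)
  also have "\<dots> \<le> a * (2 * b 0) - (2 - a) * (real V * b 0)"
    using \<open>2 - a \<ge> 0\<close> \<open>real V * b 0 \<le> _\<close> assms(3,6) by (intro diff_mono mult_left_mono) auto
  also have "\<dots> = (2 * a - (2 - a) * V) * b 0"
    by (simp add: algebra_simps)
  also have "\<dots> \<le> - b 0"
    using assms(2,4) mult_right_mono[of "2 * a - (2 - a) * V" "-1" "b 0"] by simp
  finally show ?thesis .
qed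

lemma re_ip_progression_vector_opA_le:
  fixes \<xi> :: complex
  assumes "cmod \<xi> = 1" "k = l + d" "0 < d" "l \<le> n" "0 \<le> a" "2 * a + 1 \<le> (2 - a) * V"
    and "\<And>j. j \<le> V \<Longrightarrow> f (n + j * d) \<le> a * beta k l (n + j * d)"
    and "beta k l (n + V * d) \<le> 2 * beta k l n"
  defines "x \<equiv> progression_vector (- \<xi>) d n (Suc V)"
  shows "Re (ip x (opA k l \<xi> f x)) \<le> - beta k l n"
proof -
  have "Re (\<xi> * cnj (- \<xi>)) = -1"
    using assms(1) complex_norm_square[of \<xi>] by simp
  then have "Re (ip x (opA k l \<xi> f x))
      = (\<Sum>j<Suc V. f (n + j * d)) - 2 * (\<Sum>j<V. beta k l (n + j * d))"
    using ip_progression_vector_opA[OF assms(2,3,4), of "- \<xi>" V \<xi> f] assms(1)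
    by (simp add: x_def)
  also have "\<dots> \<le> - beta k l n"
  proof (rule sum_sub_double_sum_le[of "\<lambda>j. beta k l (n + j * d)" _ _ "\<lambda>j. f (n + j * d)",
        unfolded mult_zero_left add_0_right])
    show "mono (\<lambda>j. beta k l (n + j * d))"
      by (intro monoI monoD[OF mono_beta]) simp
  qed (fact beta_nonneg assms(5-8))+
  finally show ?thesis .
qed

lemma unbounded_below_opA:
  fixes \<xi> :: complex
  assumes "cmod \<xi> = 1" "l < k" "(\<lambda>n. f n / beta k l n) \<longlonglongrightarrow> \<kappa>" "\<kappa> < 2"
  shows "unbounded_below D0 (opA k l \<xi> f)"
  unfolding unbounded_below_def
proof
  fix M :: real
  obtain d where kd: "k = l + d" and "0 < d"
    using \<open>l < k\<close> less_imp_add_positive by blast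
  obtain a where "\<kappa> < a" "0 \<le> a" "a < 2"
    using \<open>\<kappa> < 2\<close> by (intro that[of "(max \<kappa> 0 + 2) / 2"]) auto
  have beta_at_top: "\<forall>\<^sub>F n in sequentially. c < beta k l n" for c
    using filterlim_beta_at_top[of k l] \<open>l < k\<close> by (simp add: filterlim_at_top_dense)
  have "\<forall>\<^sub>F n in sequentially. f n \<le> a * beta k l n"
    using order_tendstoD(2)[OF assms(3) \<open>\<kappa> < a\<close>] beta_at_top[of 0]
    by eventually_elim (simp add: divide_less_eq mult.commute)
  then obtain N where f_le: "\<And>n. N \<le> n \<Longrightarrow> f n \<le> a * beta k l n"
    unfolding eventually_sequentially by blast
  obtain V :: nat where "(2 * a + 1) / (2 - a) < V"
    using reals_Archimedean2 by blast
  with \<open>a < 2\<close> have V: "2 * a + 1 \<le> (2 - a) * V"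
    by (simp add: divide_less_eq mult.commute)
  have "\<forall>\<^sub>F n in sequentially. N + l \<le> n \<and> beta k l (n + V * d) \<le> 2 * beta k l n
      \<and> \<bar>M\<bar> * (V + 1) < beta k l n"
    using eventually_ge_at_top eventually_beta_shift_le beta_at_top
    by (intro eventually_conj) simp_all
  then obtain n where n: "N + l \<le> n" "beta k l (n + V * d) \<le> 2 * beta k l n"
      "\<bar>M\<bar> * (V + 1) < beta k l n"
    using eventually_happens'[OF trivial_limit_sequentially] by blast
  define x where "x = progression_vector (- \<xi>) d n (Suc V)"
  have "Re (ip x (opA k l \<xi> f x)) \<le> - beta k l n"
    unfolding x_def using assms(1) kd \<open>0 < d\<close> \<open>0 \<le> a\<close> V f_le n
    by (intro re_ip_progression_vector_opA_le) auto
  also have "\<dots> < - \<bar>M\<bar> * (V + 1)"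
    using n(3) by simp
  also have "\<dots> \<le> M * (V + 1)"
    by (intro mult_right_mono) auto
  also have "\<dots> = M * nrm2 x"
    using \<open>0 < d\<close> assms(1) by (simp add: x_def nrm2_progression_vector)
  finally show "\<exists>x\<in>D0. Re (ip x (opA k l \<xi> f x)) < M * nrm2 x"
    using \<open>0 < d\<close> progression_vector_in_D0 x_def by blast
qed

lemma unbounded_below_extension:
  assumes "unbounded_below D' A" "D' \<subseteq> D" "\<forall>x\<in>D'. B x = A x"
  shows "unbounded_below D B"
  using assms unfolding unbounded_below_def by (metis subsetD)

theorem proposition4p18:
  fixes k l :: nat and \<theta> \<kappa> :: real and f :: "nat \<Rightarrow> real" and L :: "nat \<Rightarrow> real"
  assumes "l < k" and "k + l \<ge> 3"
    and "\<forall>n. f n \<ge> 0"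
    and "asymp_expansion (\<lambda>n. f n / beta k l n) L"
    and "L 0 = \<kappa>" and "\<kappa> < 2"
  shows "unbounded_below D0 (opA k l (exp (\<i> * complex_of_real \<theta>)) f)
    \<and> (\<forall>D B. self_adjoint_extension D B D0 (opA k l (exp (\<i> * complex_of_real \<theta>)) f)
              \<longrightarrow> unbounded_below D B)"
proof -
  have "(\<lambda>n. f n / beta k l n) \<longlonglongrightarrow> \<kappa>"
    using asymp_expansion_tendsto[OF assms(4)] assms(5) by simp
  then have "unbounded_below D0 (opA k l (exp (\<i> * complex_of_real \<theta>)) f)"
    using assms(1,6) by (intro unbounded_below_opA) simp_all
  then show ?thesis
    unfolding self_adjoint_extension_def by (blast intro: unbounded_below_extension)
qed

end
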